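(* Let $\alpha\geq2$ be an ordinal and let $\mathbf V$ be $TA_\alpha$ or $SA_\alpha$. Let $\mathfrak A=\mathfrak{Fr}_X\mathbf V$ be the $\mathbf V$-free algebra on $X$, and let $X_1,X_2\subseteq X$ with $X_1\cup X_2=X$. If $a\in\mathfrak{Sg}^{\mathfrak A}X_1$, $c\in\mathfrak{Sg}^{\mathfrak A}X_2$ and $a\leq c$, then there is $b\in\mathfrak{Sg}^{\mathfrak A}(X_1\cap X_2)$ with $a\leq b\leq c$.
   Context: $TA_\alpha=\mathbf{Mod}(\Sigma_\alpha)$: Boolean algebras with operators $s_{ij}$ ($i\neq j<\alpha$) that are Boolean endomorphisms satisfying $t_1(x)=t_2(x)$ for all finite words $t_1,t_2$ in the $s_{ij}$ whose associated compositions of transpositions $[i,j]$ coincide. $SA_\alpha=\mathbf{Mod}(\Sigma'_\alpha)$: Boolean algebras with Boolean-endomorphism operators $s^i_j,s_{ij}$ ($i\neq j<\alpha$) satisfying $t_1(x)=t_2(x)$ whenever the associated maps $\alpha\to\alpha$ coincide, where $s_{ij}t\mapsto[i,j]\circ\hat t$, $s^i_jt\mapsto[i/j]\circ\hat t$, the empty word $\mapsto Id_\alpha$, and $[i/j]$ sends $i$ to $j$ and fixes the rest. $\mathfrak{Sg}^{\mathfrak A}Z$ is the subalgebra generated by $Z$. *)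

theory Defs
  imports Main
begin

text \<open>The ordinal alpha is represented by its set of elements, i.e. by a type 'i
  (only the index set matters; the hypothesis alpha >= 2 becomes: 'i has two
  distinct elements).  Sw i j is s_ij, Sb i j is s^i_j.\<close>

datatype 'i lab = Sw 'i 'i | Sb 'i 'i

definition transp_map :: "'i \<Rightarrow> 'i \<Rightarrow> 'i \<Rightarrow> 'i" where
  "transp_map i j = (\<lambda>k. if k = i then j else if k = j then i else k)"

definition repl_map :: "'i \<Rightarrow> 'i \<Rightarrow> 'i \<Rightarrow> 'i" where
  "repl_map i j = (\<lambda>k. if k = i then j else k)"

fun labmap :: "'i lab \<Rightarrow> 'i \<Rightarrow> 'i" where
  "labmap (Sw i j) = transp_map i j"
| "labmap (Sb i j) = repl_map i j"

definition wmap :: "'i lab list \<Rightarrow> 'i \<Rightarrow> 'i" where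
  "wmap w = foldr (\<lambda>l f. labmap l \<circ> f) w id"

definition TAops :: "'i lab set" where
  "TAops = {Sw i j | i j. i \<noteq> j}"

definition SAops :: "'i lab set" where
  "SAops = {Sw i j | i j. i \<noteq> j} \<union> {Sb i j | i j. i \<noteq> j}"

record ('a, 'o) balg =
  car :: "'a set"
  jn  :: "'a \<Rightarrow> 'a \<Rightarrow> 'a"
  mt  :: "'a \<Rightarrow> 'a \<Rightarrow> 'a"
  cp  :: "'a \<Rightarrow> 'a"
  zr  :: "'a"
  un  :: "'a"
  sop :: "'o \<Rightarrow> 'a \<Rightarrow> 'a"

definition is_BA :: "('a, 'o, 'm) balg_scheme \<Rightarrow> bool" where
  "is_BA A \<longleftrightarrow>
     zr A \<in> car A \<and> un A \<in> car A \<and>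
     (\<forall>x\<in>car A. cp A x \<in> car A) \<and>
     (\<forall>x\<in>car A. \<forall>y\<in>car A. jn A x y \<in> car A \<and> mt A x y \<in> car A) \<and>
     (\<forall>x\<in>car A. \<forall>y\<in>car A. jn A x y = jn A y x \<and> mt A x y = mt A y x) \<and>
     (\<forall>x\<in>car A. \<forall>y\<in>car A. \<forall>z\<in>car A.
        jn A x (jn A y z) = jn A (jn A x y) z \<and> mt A x (mt A y z) = mt A (mt A x y) z) \<and>
     (\<forall>x\<in>car A. \<forall>y\<in>car A. jn A x (mt A x y) = x \<and> mt A x (jn A x y) = x) \<and>
     (\<forall>x\<in>car A. \<forall>y\<in>car A. \<forall>z\<in>car A.
        mt A x (jn A y z) = jn A (mt A x y) (mt A x z)) \<and>
     (\<forall>x\<in>car A. jn A x (zr A) = x \<and> mt A x (un A) = x) \<and>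
     (\<forall>x\<in>car A. jn A x (cp A x) = un A \<and> mt A x (cp A x) = zr A)"

definition bool_endo :: "('a, 'o, 'm) balg_scheme \<Rightarrow> ('a \<Rightarrow> 'a) \<Rightarrow> bool" where
  "bool_endo A f \<longleftrightarrow>
     (\<forall>x\<in>car A. f x \<in> car A) \<and>
     (\<forall>x\<in>car A. \<forall>y\<in>car A. f (jn A x y) = jn A (f x) (f y) \<and> f (mt A x y) = mt A (f x) (f y)) \<and>
     (\<forall>x\<in>car A. f (cp A x) = cp A (f x)) \<and>
     f (zr A) = zr A \<and> f (un A) = un A"

definition wapp :: "('a, 'i lab, 'm) balg_scheme \<Rightarrow> 'i lab list \<Rightarrow> 'a \<Rightarrow> 'a" where
  "wapp A w = foldr (\<lambda>l f. sop A l \<circ> f) w id"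

text \<open>Only the operators
  with labels in Ops belong to the signature.\<close>
definition in_var :: "'i lab set \<Rightarrow> ('a, 'i lab, 'm) balg_scheme \<Rightarrow> bool" where
  "in_var Ops A \<longleftrightarrow> is_BA A \<and> (\<forall>l\<in>Ops. bool_endo A (sop A l)) \<and>
     (\<forall>w1 w2. set w1 \<subseteq> Ops \<longrightarrow> set w2 \<subseteq> Ops \<longrightarrow> wmap w1 = wmap w2 \<longrightarrow>
        (\<forall>x\<in>car A. wapp A w1 x = wapp A w2 x))"

abbreviation TA :: "('a, 'i lab, 'm) balg_scheme \<Rightarrow> bool" where
  "TA A \<equiv> in_var TAops A"

abbreviation SA :: "('a, 'i lab, 'm) balg_scheme \<Rightarrow> bool" where
  "SA A \<equiv> in_var SAops A"

definition leq :: "('a, 'o, 'm) balg_scheme \<Rightarrow> 'a \<Rightarrow> 'a \<Rightarrow> bool" where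
  "leq A x y \<longleftrightarrow> jn A x y = y"

inductive_set Sg :: "('a, 'o, 'm) balg_scheme \<Rightarrow> 'o set \<Rightarrow> 'a set \<Rightarrow> 'a set"
  for A :: "('a, 'o, 'm) balg_scheme" and Ops :: "'o set" and Z :: "'a set" where
  gen: "z \<in> Z \<Longrightarrow> z \<in> Sg A Ops Z"
| zr: "zr A \<in> Sg A Ops Z"
| un: "un A \<in> Sg A Ops Z"
| cp: "x \<in> Sg A Ops Z \<Longrightarrow> cp A x \<in> Sg A Ops Z"
| jn: "x \<in> Sg A Ops Z \<Longrightarrow> y \<in> Sg A Ops Z \<Longrightarrow> jn A x y \<in> Sg A Ops Z"
| mt: "x \<in> Sg A Ops Z \<Longrightarrow> y \<in> Sg A Ops Z \<Longrightarrow> mt A x y \<in> Sg A Ops Z"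
| op: "l \<in> Ops \<Longrightarrow> x \<in> Sg A Ops Z \<Longrightarrow> sop A l x \<in> Sg A Ops Z"

datatype ('x, 'o) trm = Var 'x | Jn "('x, 'o) trm" "('x, 'o) trm"
  | Mt "('x, 'o) trm" "('x, 'o) trm" | Cp "('x, 'o) trm" | Zr | Tp | Op 'o "('x, 'o) trm"

fun vars :: "('x, 'o) trm \<Rightarrow> 'x set" and opsof :: "('x, 'o) trm \<Rightarrow> 'o set" where
  "vars (Var x) = {x}"
| "vars (Jn s t) = vars s \<union> vars t"
| "vars (Mt s t) = vars s \<union> vars t"
| "vars (Cp t) = vars t"
| "vars Zr = {}"
| "vars Tp = {}"
| "vars (Op l t) = vars t"
| "opsof (Var x) = {}"
| "opsof (Jn s t) = opsof s \<union> opsof t"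
| "opsof (Mt s t) = opsof s \<union> opsof t"
| "opsof (Cp t) = opsof t"
| "opsof Zr = {}"
| "opsof Tp = {}"
| "opsof (Op l t) = insert l (opsof t)"

definition Terms :: "'o set \<Rightarrow> 'x set \<Rightarrow> ('x, 'o) trm set" where
  "Terms Ops X = {t. vars t \<subseteq> X \<and> opsof t \<subseteq> Ops}"

definition is_cong :: "'o set \<Rightarrow> 'x set \<Rightarrow> (('x, 'o) trm \<times> ('x, 'o) trm) set \<Rightarrow> bool" where
  "is_cong Ops X \<psi> \<longleftrightarrow> equiv (Terms Ops X) \<psi> \<and>
     (\<forall>a b c d. (a, b) \<in> \<psi> \<longrightarrow> (c, d) \<in> \<psi> \<longrightarrow>
        (Jn a c, Jn b d) \<in> \<psi> \<and> (Mt a c, Mt b d) \<in> \<psi>) \<and>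
     (\<forall>a b. (a, b) \<in> \<psi> \<longrightarrow> (Cp a, Cp b) \<in> \<psi>) \<and>
     (\<forall>l\<in>Ops. \<forall>a b. (a, b) \<in> \<psi> \<longrightarrow> (Op l a, Op l b) \<in> \<psi>)"

definition quot :: "'o set \<Rightarrow> 'x set \<Rightarrow> (('x, 'o) trm \<times> ('x, 'o) trm) set
                    \<Rightarrow> (('x, 'o) trm set, 'o) balg" where
  "quot Ops X \<psi> =
     \<lparr> car = Terms Ops X // \<psi>,
       jn = (\<lambda>C D. \<Union>c\<in>C. \<Union>d\<in>D. \<psi> `` {Jn c d}),
       mt = (\<lambda>C D. \<Union>c\<in>C. \<Union>d\<in>D. \<psi> `` {Mt c d}),
       cp = (\<lambda>C. \<Union>c\<in>C. \<psi> `` {Cp c}),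
       zr = \<psi> `` {Zr},
       un = \<psi> `` {Tp},
       sop = (\<lambda>l C. \<Union>c\<in>C. \<psi> `` {Op l c}) \<rparr>"

definition theta :: "'i lab set \<Rightarrow> 'x set \<Rightarrow> (('x, 'i lab) trm \<times> ('x, 'i lab) trm) set" where
  "theta Ops X = (Terms Ops X \<times> Terms Ops X) \<inter>
     \<Inter>{\<psi>. is_cong Ops X \<psi> \<and> in_var Ops (quot Ops X \<psi>)}"

definition Fr :: "'i lab set \<Rightarrow> 'x set \<Rightarrow> (('x, 'i lab) trm set, 'i lab) balg" where
  "Fr Ops X = quot Ops X (theta Ops X)"

definition frgen :: "'i lab set \<Rightarrow> 'x set \<Rightarrow> 'x \<Rightarrow> ('x, 'i lab) trm set" where
  "frgen Ops X x = theta Ops X `` {Var x}"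

end

theory Submission
  imports Defs
begin

text \<open>Every operator of the signature is a Boolean endomorphism, so it can be pushed through
  the Boolean connectives down to the generators, and a word of operators acts on a generator
  only through its associated map on the index set.  Hence the free algebra is the free Boolean
  algebra on the atoms \<open>(m, x)\<close>, where \<open>x \<in> X\<close> and \<open>m\<close> is a map realised by a word: two terms
  are identified exactly when they are equivalent as propositional formulas in these atoms.
  The theorem thus reduces to Craig interpolation in propositional logic, where an interpolant
  of \<open>a \<le> c\<close> is obtained by quantifying away existentially the atoms of \<open>a\<close> whose generator
  does not lie in \<open>X\<^sub>2\<close>.\<close>

section \<open>Boolean algebras\<close>

locale BA_alg =
  fixes A :: "('a, 'o, 'm) balg_scheme"
  assumes is_BA: "is_BA A"
begin

lemma closed [simp]:
  "zr A \<in> car A" "un A \<in> car A" "x \<in> car A \<Longrightarrow> cp A x \<in> car A"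
  "x \<in> car A \<Longrightarrow> y \<in> car A \<Longrightarrow> jn A x y \<in> car A"
  "x \<in> car A \<Longrightarrow> y \<in> car A \<Longrightarrow> mt A x y \<in> car A"
  using is_BA unfolding is_BA_def by blast+

lemma comm:
  "x \<in> car A \<Longrightarrow> y \<in> car A \<Longrightarrow> jn A x y = jn A y x"
  "x \<in> car A \<Longrightarrow> y \<in> car A \<Longrightarrow> mt A x y = mt A y x"
  using is_BA unfolding is_BA_def by blast+

lemma assoc:
  "x \<in> car A \<Longrightarrow> y \<in> car A \<Longrightarrow> z \<in> car A \<Longrightarrow> jn A (jn A x y) z = jn A x (jn A y z)"
  "x \<in> car A \<Longrightarrow> y \<in> car A \<Longrightarrow> z \<in> car A \<Longrightarrow> mt A (mt A x y) z = mt A x (mt A y z)"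
  using is_BA unfolding is_BA_def by (blast intro: sym)+

lemma absorb:
  "x \<in> car A \<Longrightarrow> y \<in> car A \<Longrightarrow> jn A x (mt A x y) = x"
  "x \<in> car A \<Longrightarrow> y \<in> car A \<Longrightarrow> mt A x (jn A x y) = x"
  using is_BA unfolding is_BA_def by blast+

lemma mt_jn_distrib:
  "x \<in> car A \<Longrightarrow> y \<in> car A \<Longrightarrow> z \<in> car A \<Longrightarrow> mt A x (jn A y z) = jn A (mt A x y) (mt A x z)"
  using is_BA unfolding is_BA_def by blast

lemma neutral [simp]:
  "x \<in> car A \<Longrightarrow> jn A x (zr A) = x" "x \<in> car A \<Longrightarrow> mt A x (un A) = x"
  "x \<in> car A \<Longrightarrow> jn A (zr A) x = x" "x \<in> car A \<Longrightarrow> mt A (un A) x = x"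
  using is_BA comm[of x] unfolding is_BA_def by auto

lemma complement:
  "x \<in> car A \<Longrightarrow> jn A x (cp A x) = un A" "x \<in> car A \<Longrightarrow> mt A x (cp A x) = zr A"
  using is_BA unfolding is_BA_def by blast+

lemma idem:
  "x \<in> car A \<Longrightarrow> mt A x x = x" "x \<in> car A \<Longrightarrow> jn A x x = x"
  using absorb[of x "zr A"] absorb[of x "un A"] by simp_all

lemma mt_jn_distrib_right:
  "x \<in> car A \<Longrightarrow> y \<in> car A \<Longrightarrow> z \<in> car A \<Longrightarrow> mt A (jn A y z) x = jn A (mt A y x) (mt A z x)"
  using mt_jn_distrib[of x y z] comm(2)[of x] by simp

lemma annihilate [simp]:
  "x \<in> car A \<Longrightarrow> mt A x (zr A) = zr A" "x \<in> car A \<Longrightarrow> jn A x (un A) = un A"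
  "x \<in> car A \<Longrightarrow> mt A (zr A) x = zr A" "x \<in> car A \<Longrightarrow> jn A (un A) x = un A"
proof -
  assume x: "x \<in> car A"
  have "mt A x (zr A) = mt A (mt A x x) (cp A x)" using x by (simp add: assoc complement)
  then show mz: "mt A x (zr A) = zr A" using x by (simp add: idem complement)
  have "jn A x (un A) = jn A (jn A x x) (cp A x)" using x by (simp add: assoc complement)
  then show ju: "jn A x (un A) = un A" using x by (simp add: idem complement)
  show "mt A (zr A) x = zr A" "jn A (un A) x = un A" using mz ju x comm[of x] by simp_all
qed

lemma cp_unique:
  assumes x: "x \<in> car A" and y: "y \<in> car A"
    and jn_un: "jn A x y = un A" and mt_zr: "mt A x y = zr A"
  shows "y = cp A x"
proof -
  have "y = mt A y (jn A x (cp A x))" using x y by (simp add: complement)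
  also have "\<dots> = mt A y (cp A x)"
    using x y mt_zr by (simp add: mt_jn_distrib comm(2)[of y x])
  also have "\<dots> = mt A (cp A x) y" using x y by (simp add: comm(2))
  also have "\<dots> = mt A (cp A x) (jn A x y)"
    using x y by (simp add: mt_jn_distrib complement comm(2)[of "cp A x" x])
  also have "\<dots> = cp A x" using x jn_un by simp
  finally show ?thesis .
qed

lemma cp_zr: "cp A (zr A) = un A" and cp_un: "cp A (un A) = zr A"
  by (rule cp_unique[symmetric]; simp)+

lemma swap:
  "x \<in> car A \<Longrightarrow> y \<in> car A \<Longrightarrow> z \<in> car A \<Longrightarrow> w \<in> car A \<Longrightarrow>
     jn A (jn A x y) (jn A z w) = jn A (jn A x z) (jn A y w)"
  "x \<in> car A \<Longrightarrow> y \<in> car A \<Longrightarrow> z \<in> car A \<Longrightarrow> w \<in> car A \<Longrightarrow>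
     mt A (mt A x y) (mt A z w) = mt A (mt A x z) (mt A y w)"
  by (simp_all add: assoc, metis assoc closed comm, metis assoc closed comm)

text \<open>The Boolean conditional "if \<open>P\<close> then \<open>a\<close> else \<open>b\<close>"; for fixed \<open>P\<close> it commutes with all
  Boolean operations, which is what drives the Shannon expansion below.\<close>

definition cond :: "'a \<Rightarrow> 'a \<Rightarrow> 'a \<Rightarrow> 'a" where
  "cond P a b = jn A (mt A P a) (mt A (cp A P) b)"

lemma cond_closed [simp]: "P \<in> car A \<Longrightarrow> a \<in> car A \<Longrightarrow> b \<in> car A \<Longrightarrow> cond P a b \<in> car A"
  unfolding cond_def by simp

lemma cond_same: "P \<in> car A \<Longrightarrow> a \<in> car A \<Longrightarrow> cond P a a = a"
  unfolding cond_def by (simp add: mt_jn_distrib_right[symmetric] complement)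

lemma cond_un_zr: "P \<in> car A \<Longrightarrow> cond P (un A) (zr A) = P"
  unfolding cond_def by simp

lemma cond_jn:
  "\<lbrakk>P \<in> car A; a \<in> car A; b \<in> car A; c \<in> car A; d \<in> car A\<rbrakk> \<Longrightarrow>
     jn A (cond P a b) (cond P c d) = cond P (jn A a c) (jn A b d)"
  unfolding cond_def by (simp add: mt_jn_distrib swap)

lemma cond_mt:
  assumes P: "P \<in> car A" and abcd: "a \<in> car A" "b \<in> car A" "c \<in> car A" "d \<in> car A"
  shows "mt A (cond P a b) (cond P c d) = cond P (mt A a c) (mt A b d)"
proof -
  note C = P abcd
  have PP: "mt A (mt A P a) (mt A P c) = mt A P (mt A a c)"
    using C by (simp add: swap idem)
  have QQ: "mt A (mt A (cp A P) b) (mt A (cp A P) d) = mt A (cp A P) (mt A b d)"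
    using C swap(2)[of "cp A P" b "cp A P" d] by (simp add: idem)
  have PQ: "mt A (mt A P a) (mt A (cp A P) d) = zr A"
    using C swap(2)[of P a "cp A P" d] by (simp add: complement)
  have QP: "mt A (mt A (cp A P) b) (mt A P c) = zr A"
    using C swap(2)[of "cp A P" b P c] by (simp add: comm(2)[of "cp A P" P] complement)
  show ?thesis
    unfolding cond_def using C
    by (simp add: mt_jn_distrib mt_jn_distrib_right PP QQ PQ QP)
qed

lemma cond_cp:
  assumes "P \<in> car A" "a \<in> car A" "b \<in> car A"
  shows "cp A (cond P a b) = cond P (cp A a) (cp A b)"
  by (rule cp_unique[symmetric])
    (use assms in \<open>simp_all add: cond_jn cond_mt complement cond_same\<close>)

end

section \<open>Propositional formulas\<close>

datatype 'p bf = BV 'p | BJ "'p bf" "'p bf" | BM "'p bf" "'p bf" | BC "'p bf" | B0 | B1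

primrec beval :: "('p \<Rightarrow> bool) \<Rightarrow> 'p bf \<Rightarrow> bool" where
  "beval v (BV p) = v p"
| "beval v (BJ f g) = (beval v f \<or> beval v g)"
| "beval v (BM f g) = (beval v f \<and> beval v g)"
| "beval v (BC f) = (\<not> beval v f)"
| "beval v B0 = False"
| "beval v B1 = True"

primrec binterp :: "('a, 'o, 'm) balg_scheme \<Rightarrow> ('p \<Rightarrow> 'a) \<Rightarrow> 'p bf \<Rightarrow> 'a" where
  "binterp A r (BV p) = r p"
| "binterp A r (BJ f g) = jn A (binterp A r f) (binterp A r g)"
| "binterp A r (BM f g) = mt A (binterp A r f) (binterp A r g)"
| "binterp A r (BC f) = cp A (binterp A r f)"
| "binterp A r B0 = zr A"
| "binterp A r B1 = un A"

primrec bfix :: "'p \<Rightarrow> bool \<Rightarrow> 'p bf \<Rightarrow> 'p bf" where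
  "bfix p b (BV q) = (if q = p then (if b then B1 else B0) else BV q)"
| "bfix p b (BJ f g) = BJ (bfix p b f) (bfix p b g)"
| "bfix p b (BM f g) = BM (bfix p b f) (bfix p b g)"
| "bfix p b (BC f) = BC (bfix p b f)"
| "bfix p b B0 = B0"
| "bfix p b B1 = B1"

lemma beval_bfix: "beval v (bfix p b f) = beval (v(p := b)) f"
  by (induct f) auto

lemma set_bfix: "set_bf (bfix p b f) = set_bf f - {p}"
  by (induct f) auto

lemma beval_cong: "(\<And>q. q \<in> set_bf f \<Longrightarrow> v q = w q) \<Longrightarrow> beval v f = beval w f"
  by (induct f) auto

lemma binterp_cong: "(\<And>q. q \<in> set_bf f \<Longrightarrow> r q = r' q) \<Longrightarrow> binterp A r f = binterp A r' f"
  by (induct f) auto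

lemma beval_map: "beval v (map_bf g f) = beval (v \<circ> g) f"
  by (induct f) auto

lemma binterp_map: "binterp A r (map_bf g f) = binterp A (r \<circ> g) f"
  by (induct f) auto

context BA_alg
begin

lemma binterp_closed: "r ` set_bf f \<subseteq> car A \<Longrightarrow> binterp A r f \<in> car A"
  by (induct f) (auto simp: image_Un)

lemma binterp_bfix_closed: "r ` set_bf f \<subseteq> car A \<Longrightarrow> binterp A r (bfix p b f) \<in> car A"
  by (rule binterp_closed) (auto simp: set_bfix)

lemma binterp_shannon:
  assumes p: "r p \<in> car A" and "r ` set_bf f \<subseteq> car A"
  shows "binterp A r f = cond (r p) (binterp A r (bfix p True f)) (binterp A r (bfix p False f))"
  using assms(2)
proof (induct f)
  case (BV q)
  then show ?case using p by (simp add: cond_un_zr cond_same)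
next
  case (BJ f g)
  then have "r ` set_bf f \<subseteq> car A" "r ` set_bf g \<subseteq> car A" by auto
  with BJ.hyps show ?case using p by (simp add: binterp_bfix_closed cond_jn)
next
  case (BM f g)
  then have "r ` set_bf f \<subseteq> car A" "r ` set_bf g \<subseteq> car A" by auto
  with BM.hyps show ?case using p by (simp add: binterp_bfix_closed cond_mt)
next
  case (BC f)
  then show ?case using p by (simp add: binterp_bfix_closed cond_cp)
qed (simp_all add: p cond_same)

lemma binterp_ground: "set_bf f = {} \<Longrightarrow> binterp A r f = (if beval v f then un A else zr A)"
  by (induct f) (auto simp: cp_zr cp_un)

lemma binterp_eq_if_beval_eq:
  assumes "set_bf f \<union> set_bf g \<subseteq> set ps" and "r ` set ps \<subseteq> car A"
    and "\<And>v. beval v f = beval v g"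
  shows "binterp A r f = binterp A r g"
  using assms
proof (induct ps arbitrary: f g)
  case Nil
  then show ?case using binterp_ground[of f r "\<lambda>_. False"] binterp_ground[of g r "\<lambda>_. False"]
    by simp
next
  case (Cons p ps)
  have fix_eq: "binterp A r (bfix p b f) = binterp A r (bfix p b g)" for b
  proof (rule Cons.hyps)
    show "set_bf (bfix p b f) \<union> set_bf (bfix p b g) \<subseteq> set ps"
      using Cons.prems(1) by (auto simp: set_bfix)
    show "r ` set ps \<subseteq> car A" using Cons.prems(2) by simp
    show "beval v (bfix p b f) = beval v (bfix p b g)" for v
      using Cons.prems(3)[of "v(p := b)"] by (simp only: beval_bfix)
  qed
  have "r p \<in> car A" "r ` set_bf f \<subseteq> car A" "r ` set_bf g \<subseteq> car A"
    using Cons.prems(2) subset_trans[OF image_mono[OF Cons.prems(1)] Cons.prems(2)]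
    by (simp_all add: image_Un)
  then show ?case using binterp_shannon fix_eq by metis
qed

end

fun bexists :: "'p list \<Rightarrow> 'p bf \<Rightarrow> 'p bf" where
  "bexists [] f = f"
| "bexists (p # ps) f = BJ (bfix p True (bexists ps f)) (bfix p False (bexists ps f))"

lemma set_bexists: "set_bf (bexists ps f) = set_bf f - set ps"
  by (induct ps) (auto simp: set_bfix)

lemma beval_bexists:
  "beval v (bexists ps f) \<longleftrightarrow> (\<exists>w. (\<forall>q. q \<notin> set ps \<longrightarrow> w q = v q) \<and> beval w f)"
proof (induct ps arbitrary: v)
  case Nil
  show ?case by (simp add: fun_eq_iff[symmetric])
next
  case (Cons p ps)
  have "beval v (bexists (p # ps) f) \<longleftrightarrow>
      beval (v(p := True)) (bexists ps f) \<or> beval (v(p := False)) (bexists ps f)"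
    by (simp add: beval_bfix)
  also have "\<dots> \<longleftrightarrow> (\<exists>w. (\<forall>q. q \<notin> set (p # ps) \<longrightarrow> w q = v q) \<and> beval w f)"
    unfolding Cons
  proof safe
    fix w assume "\<forall>q. q \<notin> set ps \<longrightarrow> w q = (v(p := True)) q" "beval w f"
    then show "\<exists>w. (\<forall>q. q \<notin> set (p # ps) \<longrightarrow> w q = v q) \<and> beval w f"
      by (intro exI[of _ w]) auto
  next
    fix w assume "\<forall>q. q \<notin> set ps \<longrightarrow> w q = (v(p := False)) q" "beval w f"
    then show "\<exists>w. (\<forall>q. q \<notin> set (p # ps) \<longrightarrow> w q = v q) \<and> beval w f"
      by (intro exI[of _ w]) auto
  next
    fix w assume w: "\<forall>q. q \<notin> set (p # ps) \<longrightarrow> w q = v q" "beval w f"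
      and none: "\<nexists>w. (\<forall>q. q \<notin> set ps \<longrightarrow> w q = (v(p := False)) q) \<and> beval w f"
    show "\<exists>w. (\<forall>q. q \<notin> set ps \<longrightarrow> w q = (v(p := True)) q) \<and> beval w f"
    proof (cases "w p")
      case True
      then show ?thesis using w by (intro exI[of _ w]) auto
    next
      case False
      then have "\<forall>q. q \<notin> set ps \<longrightarrow> w q = (v(p := False)) q" using w(1) by auto
      then show ?thesis using w(2) none by blast
    qed
  qed
  finally show ?case .
qed

lemma bf_interpolation:
  assumes fg: "\<And>v. beval v f \<Longrightarrow> beval v g" and S: "set_bf g \<subseteq> S"
  obtains h where "set_bf h \<subseteq> set_bf f \<inter> S"
    and "\<And>v. beval v f \<Longrightarrow> beval v h" and "\<And>v. beval v h \<Longrightarrow> beval v g"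
proof -
  obtain ps where ps: "set ps = set_bf f - S"
    using finite_list[of "set_bf f - S"] bf.set_finite by blast
  have "beval v g" if h: "beval v (bexists ps f)" for v
  proof -
    obtain w where w: "\<And>q. q \<notin> set ps \<Longrightarrow> w q = v q" and wf: "beval w f"
      using h by (auto simp: beval_bexists)
    have "beval w g" using wf by (rule fg)
    moreover have "w q = v q" if "q \<in> set_bf g" for q
      using that S ps w by blast
    ultimately show ?thesis using beval_cong[of g w v] by simp
  qed
  moreover have "beval v (bexists ps f)" if "beval v f" for v
    using that by (auto simp: beval_bexists)
  moreover have "set_bf (bexists ps f) \<subseteq> set_bf f \<inter> S"
    using ps by (auto simp: set_bexists)
  ultimately show ?thesis using that by blast
qed

section \<open>Terms as propositional formulas\<close>

text \<open>A term is read as a propositional formula in the atoms \<open>(m, x)\<close>: the atom \<open>(m, x)\<close> stands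
  for the generator \<open>x\<close> under an operator word with associated map \<open>m\<close>, so an operator \<open>Op l\<close>
  precomposes the map component of every atom below it with \<open>labmap l\<close>.\<close>

fun teval :: "(('i \<Rightarrow> 'i) \<times> 'x \<Rightarrow> bool) \<Rightarrow> ('x, 'i lab) trm \<Rightarrow> bool" where
  "teval v (Var x) = v (id, x)"
| "teval v (Jn s t) = (teval v s \<or> teval v t)"
| "teval v (Mt s t) = (teval v s \<and> teval v t)"
| "teval v (Cp t) = (\<not> teval v t)"
| "teval v Zr = False"
| "teval v Tp = True"
| "teval v (Op l t) = teval (\<lambda>(m, x). v (labmap l \<circ> m, x)) t"

definition op_word :: "'o list \<Rightarrow> ('x, 'o) trm \<Rightarrow> ('x, 'o) trm" where
  "op_word w t = foldr Op w t"

lemma op_word_simps [simp]: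
  "op_word [] t = t" "op_word (l # w) t = Op l (op_word w t)" "op_word (w @ [l]) t = op_word w (Op l t)"
  by (simp_all add: op_word_def)

lemma vars_op_word: "vars (op_word w t) = vars t"
  and opsof_op_word: "opsof (op_word w t) = set w \<union> opsof t"
  by (induct w) auto

lemma wmap_simps [simp]: "wmap [] = id" "wmap (l # w) = labmap l \<circ> wmap w"
  by (simp_all add: wmap_def)

lemma wmap_append_single: "wmap (w @ [l]) = wmap w \<circ> labmap l"
  by (induct w) (auto simp: comp_assoc)

lemma teval_op_word: "teval v (op_word w t) = teval (\<lambda>(m, x). v (wmap w \<circ> m, x)) t"
  by (induct w arbitrary: v) (simp_all add: case_prod_unfold comp_def)

fun push_ops :: "'o list \<Rightarrow> ('x, 'o) trm \<Rightarrow> ('o list \<times> 'x) bf" where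
  "push_ops w (Var x) = BV (w, x)"
| "push_ops w (Jn s t) = BJ (push_ops w s) (push_ops w t)"
| "push_ops w (Mt s t) = BM (push_ops w s) (push_ops w t)"
| "push_ops w (Cp t) = BC (push_ops w t)"
| "push_ops w Zr = B0"
| "push_ops w Tp = B1"
| "push_ops w (Op l t) = push_ops (w @ [l]) t"

lemma teval_push_ops:
  "teval (\<lambda>(m, x). v (wmap w \<circ> m, x)) t = beval (\<lambda>(w', x). v (wmap w', x)) (push_ops w t)"
proof (induct t arbitrary: w)
  case (Op l t)
  then show ?case using Op[of "w @ [l]"] by (simp add: case_prod_unfold wmap_append_single comp_def)
qed (auto simp: case_prod_unfold)

lemma set_push_ops: "q \<in> set_bf (push_ops w t) \<Longrightarrow> set (fst q) \<subseteq> set w \<union> opsof t \<and> snd q \<in> vars t"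
  by (induct t arbitrary: w) fastforce+

definition atom_of :: "'i lab list \<times> 'x \<Rightarrow> ('i \<Rightarrow> 'i) \<times> 'x" where
  "atom_of q = (wmap (fst q), snd q)"

definition prop_form :: "('x, 'i lab) trm \<Rightarrow> (('i \<Rightarrow> 'i) \<times> 'x) bf" where
  "prop_form t = map_bf atom_of (push_ops [] t)"

lemma teval_prop_form: "teval v t = beval v (prop_form t)"
  using teval_push_ops[of v "[]" t]
  by (simp add: prop_form_def beval_map atom_of_def comp_def case_prod_unfold)

definition realizable :: "'i lab set \<Rightarrow> ('i \<Rightarrow> 'i) \<Rightarrow> bool" where
  "realizable Ops m \<longleftrightarrow> (\<exists>w. set w \<subseteq> Ops \<and> wmap w = m)"

definition word_of :: "'i lab set \<Rightarrow> ('i \<Rightarrow> 'i) \<Rightarrow> 'i lab list" where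
  "word_of Ops m = (SOME w. set w \<subseteq> Ops \<and> wmap w = m)"

lemma word_of: "realizable Ops m \<Longrightarrow> set (word_of Ops m) \<subseteq> Ops \<and> wmap (word_of Ops m) = m"
  unfolding realizable_def word_of_def by (rule someI_ex)

lemma set_prop_form:
  assumes "t \<in> Terms Ops X" and "q \<in> set_bf (prop_form t)"
  shows "realizable Ops (fst q) \<and> snd q \<in> vars t"
proof -
  obtain q' where q': "q' \<in> set_bf (push_ops [] t)" "q = atom_of q'"
    using assms(2) unfolding prop_form_def by (auto simp: bf.set_map)
  then have "set (fst q') \<subseteq> Ops" "snd q \<in> vars t"
    using set_push_ops[OF q'(1)] assms(1) by (auto simp: Terms_def atom_of_def)
  then show ?thesis using q' unfolding realizable_def atom_of_def by auto
qed

fun trm_of_bf :: "'i lab set \<Rightarrow> (('i \<Rightarrow> 'i) \<times> 'x) bf \<Rightarrow> ('x, 'i lab) trm" where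
  "trm_of_bf Ops (BV q) = op_word (word_of Ops (fst q)) (Var (snd q))"
| "trm_of_bf Ops (BJ f g) = Jn (trm_of_bf Ops f) (trm_of_bf Ops g)"
| "trm_of_bf Ops (BM f g) = Mt (trm_of_bf Ops f) (trm_of_bf Ops g)"
| "trm_of_bf Ops (BC f) = Cp (trm_of_bf Ops f)"
| "trm_of_bf Ops B0 = Zr"
| "trm_of_bf Ops B1 = Tp"

lemma vars_trm_of_bf: "vars (trm_of_bf Ops f) = snd ` set_bf f"
  by (induct f) (auto simp: vars_op_word)

lemma opsof_trm_of_bf:
  "\<forall>q\<in>set_bf f. realizable Ops (fst q) \<Longrightarrow> opsof (trm_of_bf Ops f) \<subseteq> Ops"
  by (induct f) (auto simp: opsof_op_word dest: word_of)

lemma teval_trm_of_bf: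
  "\<forall>q\<in>set_bf f. realizable Ops (fst q) \<Longrightarrow> teval v (trm_of_bf Ops f) = beval v f"
  by (induct f) (auto simp: teval_op_word dest: word_of)

lemma teval_interpolation:
  assumes s: "s \<in> Terms Ops X" "vars s \<subseteq> X1" and t: "t \<in> Terms Ops X" "vars t \<subseteq> X2"
    and st: "\<And>v. teval v s \<Longrightarrow> teval v t"
  obtains u where "u \<in> Terms Ops X" "vars u \<subseteq> X1 \<inter> X2"
    and "\<And>v. teval v s \<Longrightarrow> teval v u" and "\<And>v. teval v u \<Longrightarrow> teval v t"
proof -
  have atoms_t: "set_bf (prop_form t) \<subseteq> {q. snd q \<in> X2}"
    using set_prop_form[OF t(1)] t(2) by blast
  obtain h where h: "set_bf h \<subseteq> set_bf (prop_form s) \<inter> {q. snd q \<in> X2}"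
    and sh: "\<And>v. beval v (prop_form s) \<Longrightarrow> beval v h"
    and ht: "\<And>v. beval v h \<Longrightarrow> beval v (prop_form t)"
    using bf_interpolation[OF st[unfolded teval_prop_form] atoms_t] by blast
  have atoms: "realizable Ops (fst q) \<and> snd q \<in> X \<inter> X1 \<inter> X2" if "q \<in> set_bf h" for q
  proof -
    have "q \<in> set_bf (prop_form s)" "snd q \<in> X2" using that h by auto
    then show ?thesis using set_prop_form[OF s(1), of q] s by (auto simp: Terms_def)
  qed
  then have teval_h: "teval v (trm_of_bf Ops h) = beval v h" for v
    by (simp add: teval_trm_of_bf)
  show ?thesis
  proof (rule that[of "trm_of_bf Ops h"])
    show "trm_of_bf Ops h \<in> Terms Ops X" "vars (trm_of_bf Ops h) \<subseteq> X1 \<inter> X2"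
      using atoms opsof_trm_of_bf[of h Ops] by (auto simp: Terms_def vars_trm_of_bf)
    show "teval v (trm_of_bf Ops h)" if "teval v s" for v
      using that sh by (simp add: teval_h teval_prop_form[of v s])
    show "teval v t" if "teval v (trm_of_bf Ops h)" for v
      using that ht by (simp add: teval_h teval_prop_form[of v t])
  qed
qed

section \<open>The free algebra\<close>

lemma Terms_simps [simp]:
  "Var x \<in> Terms Ops X \<longleftrightarrow> x \<in> X"
  "Jn a b \<in> Terms Ops X \<longleftrightarrow> a \<in> Terms Ops X \<and> b \<in> Terms Ops X"
  "Mt a b \<in> Terms Ops X \<longleftrightarrow> a \<in> Terms Ops X \<and> b \<in> Terms Ops X"
  "Cp a \<in> Terms Ops X \<longleftrightarrow> a \<in> Terms Ops X"
  "Zr \<in> Terms Ops X" "Tp \<in> Terms Ops X"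
  "Op l a \<in> Terms Ops X \<longleftrightarrow> l \<in> Ops \<and> a \<in> Terms Ops X"
  by (auto simp: Terms_def)

lemma op_word_Terms: "set w \<subseteq> Ops \<Longrightarrow> t \<in> Terms Ops X \<Longrightarrow> op_word w t \<in> Terms Ops X"
  by (induct w) auto

lemma UN_equiv_class_respects:
  assumes "equiv S r" "a \<in> S" "\<And>c. (a, c) \<in> r \<Longrightarrow> (f a, f c) \<in> r"
  shows "(\<Union>c\<in>r``{a}. r``{f c}) = r``{f a}"
proof -
  have "r``{f c} = r``{f a}" if "c \<in> r``{a}" for c
    using that assms by (metis Image_singleton_iff equiv_class_eq sym_def equiv_def)
  moreover have "a \<in> r``{a}" using assms(1,2) by (rule equiv_class_self)
  ultimately show ?thesis by blast
qed

lemma quot_simps [simp]: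
  "car (quot Ops X \<psi>) = Terms Ops X // \<psi>" "zr (quot Ops X \<psi>) = \<psi>``{Zr}" "un (quot Ops X \<psi>) = \<psi>``{Tp}"
  by (simp_all add: quot_def)

lemma quot_cong_refl:
  assumes "is_cong Ops X \<psi>" "(a, c) \<in> \<psi>"
  shows "(c, c) \<in> \<psi>"
  using assms unfolding is_cong_def equiv_def refl_on_def by blast

lemma quot_jn_mt:
  assumes C: "is_cong Ops X \<psi>" and a: "a \<in> Terms Ops X" and b: "b \<in> Terms Ops X"
  shows "jn (quot Ops X \<psi>) (\<psi>``{a}) (\<psi>``{b}) = \<psi>``{Jn a b}"
    and "mt (quot Ops X \<psi>) (\<psi>``{a}) (\<psi>``{b}) = \<psi>``{Mt a b}"
proof -
  have E: "equiv (Terms Ops X) \<psi>" using C by (simp add: is_cong_def)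
  have compat: "(Jn c d, Jn c' d') \<in> \<psi> \<and> (Mt c d, Mt c' d') \<in> \<psi>"
    if "(c, c') \<in> \<psi>" "(d, d') \<in> \<psi>" for c c' d d'
    using C that by (simp add: is_cong_def)
  have "(b, b) \<in> \<psi>" using E b unfolding equiv_def refl_on_def by blast
  then show "jn (quot Ops X \<psi>) (\<psi>``{a}) (\<psi>``{b}) = \<psi>``{Jn a b}"
    and "mt (quot Ops X \<psi>) (\<psi>``{a}) (\<psi>``{b}) = \<psi>``{Mt a b}"
    using UN_equiv_class_respects[OF E b, of "Jn _"] UN_equiv_class_respects[OF E a, of "\<lambda>c. Jn c b"]
      UN_equiv_class_respects[OF E b, of "Mt _"] UN_equiv_class_respects[OF E a, of "\<lambda>c. Mt c b"]
      quot_cong_refl[OF C] compat by (simp_all add: quot_def)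
qed

lemma quot_cp_sop:
  assumes C: "is_cong Ops X \<psi>" and a: "a \<in> Terms Ops X"
  shows "cp (quot Ops X \<psi>) (\<psi>``{a}) = \<psi>``{Cp a}"
    and "l \<in> Ops \<Longrightarrow> sop (quot Ops X \<psi>) l (\<psi>``{a}) = \<psi>``{Op l a}"
proof -
  have E: "equiv (Terms Ops X) \<psi>" using C by (simp add: is_cong_def)
  show "cp (quot Ops X \<psi>) (\<psi>``{a}) = \<psi>``{Cp a}"
    using UN_equiv_class_respects[OF E a, of Cp] C by (simp add: quot_def is_cong_def)
  show "sop (quot Ops X \<psi>) l (\<psi>``{a}) = \<psi>``{Op l a}" if "l \<in> Ops"
    using UN_equiv_class_respects[OF E a, of "Op l"] C that by (simp add: quot_def is_cong_def)
qed

lemmas quot_ops = quot_jn_mt quot_cp_sop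

lemma wapp_simps [simp]: "wapp A [] x = x" "wapp A (l # w) x = sop A l (wapp A w x)"
  by (simp_all add: wapp_def)

lemma wapp_quot:
  "is_cong Ops X \<psi> \<Longrightarrow> set w \<subseteq> Ops \<Longrightarrow> a \<in> Terms Ops X \<Longrightarrow>
     wapp (quot Ops X \<psi>) w (\<psi>``{a}) = \<psi>``{op_word w a}"
  by (induct w) (auto simp: quot_ops op_word_Terms)

definition prop_equiv :: "'i lab set \<Rightarrow> 'x set \<Rightarrow> (('x, 'i lab) trm \<times> ('x, 'i lab) trm) set" where
  "prop_equiv Ops X =
     {(s, t). s \<in> Terms Ops X \<and> t \<in> Terms Ops X \<and> (\<forall>v. teval v s = teval v t)}"

lemma is_cong_prop_equiv: "is_cong Ops X (prop_equiv Ops X)"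
  unfolding is_cong_def equiv_def refl_on_def sym_def trans_def prop_equiv_def by auto

lemma prop_equiv_class_eq_iff:
  "a \<in> Terms Ops X \<Longrightarrow> b \<in> Terms Ops X \<Longrightarrow>
     prop_equiv Ops X``{a} = prop_equiv Ops X``{b} \<longleftrightarrow> (\<forall>v. teval v a = teval v b)"
  using eq_equiv_class_iff[of "Terms Ops X" "prop_equiv Ops X" a b] is_cong_prop_equiv[of Ops X]
  by (auto simp: is_cong_def prop_equiv_def)

lemma ball_quot: "(\<forall>x\<in>car (quot Ops X \<psi>). P x) \<longleftrightarrow> (\<forall>a\<in>Terms Ops X. P (\<psi>``{a}))"
  by (auto elim!: quotientE intro: quotientI)

lemma in_var_quot_prop_equiv: "in_var Ops (quot Ops X (prop_equiv Ops X))"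
proof -
  let ?E = "prop_equiv Ops X"
  let ?Q = "quot Ops X ?E"
  note ops = quot_ops[OF is_cong_prop_equiv]
  have "is_BA ?Q"
    unfolding is_BA_def ball_quot by (simp add: ops prop_equiv_class_eq_iff quotientI) auto
  moreover have "bool_endo ?Q (sop ?Q l)" if "l \<in> Ops" for l
    unfolding bool_endo_def ball_quot using that
    by (simp add: ops prop_equiv_class_eq_iff quotientI case_prod_unfold)
  moreover have "wapp ?Q w1 x = wapp ?Q w2 x"
    if w: "set w1 \<subseteq> Ops" "set w2 \<subseteq> Ops" "wmap w1 = wmap w2" and x: "x \<in> car ?Q"
    for w1 w2 x
  proof -
    obtain a where "a \<in> Terms Ops X" "x = ?E``{a}" using x by (auto elim: quotientE)
    with w show ?thesis
      by (simp add: wapp_quot[OF is_cong_prop_equiv] prop_equiv_class_eq_iff op_word_Terms teval_op_word)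
  qed
  ultimately show ?thesis unfolding in_var_def by blast
qed

lemma in_var_wapp_eq:
  "in_var Ops A \<Longrightarrow> set w1 \<subseteq> Ops \<Longrightarrow> set w2 \<subseteq> Ops \<Longrightarrow> wmap w1 = wmap w2 \<Longrightarrow> x \<in> car A \<Longrightarrow>
     wapp A w1 x = wapp A w2 x"
  unfolding in_var_def by blast

lemma bool_endo_id: "bool_endo A id"
  by (simp add: bool_endo_def)

lemma bool_endo_comp: "bool_endo A f \<Longrightarrow> bool_endo A g \<Longrightarrow> bool_endo A (f \<circ> g)"
  by (simp add: bool_endo_def)

lemma bool_endo_wapp:
  assumes "in_var Ops A" "set w \<subseteq> Ops"
  shows "bool_endo A (wapp A w)"
  using assms(2)
proof (induct w)
  case Nil
  then show ?case using bool_endo_id by (simp add: id_def)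
next
  case (Cons l w)
  then have "bool_endo A (sop A l \<circ> wapp A w)"
    using assms(1) by (intro bool_endo_comp) (auto simp: in_var_def)
  then show ?case by (simp add: comp_def)
qed

lemma class_op_word_eq_binterp_push_ops:
  assumes C: "is_cong Ops X \<psi>" and V: "in_var Ops (quot Ops X \<psi>)"
  shows "t \<in> Terms Ops X \<Longrightarrow> set w \<subseteq> Ops \<Longrightarrow>
    \<psi>``{op_word w t} =
      binterp (quot Ops X \<psi>) (\<lambda>q. \<psi>``{op_word (fst q) (Var (snd q))}) (push_ops w t)"
proof (induct t arbitrary: w)
  case (Op l t)
  then show ?case using Op(1)[of "w @ [l]"] by simp
next
  case (Var x)
  then show ?case by simp
next
  case (Jn a b)
  have "\<psi>``{op_word w (Jn a b)} = wapp (quot Ops X \<psi>) w (jn (quot Ops X \<psi>) (\<psi>``{a}) (\<psi>``{b}))"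
    using Jn.prems by (simp add: C wapp_quot quot_ops)
  also have "\<dots> = jn (quot Ops X \<psi>) (\<psi>``{op_word w a}) (\<psi>``{op_word w b})"
    using bool_endo_wapp[OF V Jn.prems(2)] Jn.prems by (simp add: bool_endo_def C wapp_quot quotientI)
  finally show ?case using Jn by simp
next
  case (Mt a b)
  have "\<psi>``{op_word w (Mt a b)} = wapp (quot Ops X \<psi>) w (mt (quot Ops X \<psi>) (\<psi>``{a}) (\<psi>``{b}))"
    using Mt.prems by (simp add: C wapp_quot quot_ops)
  also have "\<dots> = mt (quot Ops X \<psi>) (\<psi>``{op_word w a}) (\<psi>``{op_word w b})"
    using bool_endo_wapp[OF V Mt.prems(2)] Mt.prems by (simp add: bool_endo_def C wapp_quot quotientI)
  finally show ?case using Mt by simp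
next
  case (Cp a)
  have "\<psi>``{op_word w (Cp a)} = wapp (quot Ops X \<psi>) w (cp (quot Ops X \<psi>) (\<psi>``{a}))"
    using Cp.prems by (simp add: C wapp_quot quot_ops)
  also have "\<dots> = cp (quot Ops X \<psi>) (\<psi>``{op_word w a})"
    using bool_endo_wapp[OF V Cp.prems(2)] Cp.prems by (simp add: bool_endo_def C wapp_quot quotientI)
  finally show ?case using Cp by simp
next
  case Zr
  then show ?case
    using bool_endo_wapp[OF V Zr.prems(2)] wapp_quot[OF C Zr.prems(2,1)] by (simp add: bool_endo_def)
next
  case Tp
  then show ?case
    using bool_endo_wapp[OF V Tp.prems(2)] wapp_quot[OF C Tp.prems(2,1)] by (simp add: bool_endo_def)
qed

definition atom_class :: "'i lab set \<Rightarrow> (('x, 'i lab) trm \<times> ('x, 'i lab) trm) set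
    \<Rightarrow> ('i \<Rightarrow> 'i) \<times> 'x \<Rightarrow> ('x, 'i lab) trm set" where
  "atom_class Ops \<psi> q = \<psi>``{op_word (word_of Ops (fst q)) (Var (snd q))}"

text \<open>Words with the same associated map act alike in \<open>V\<close>, so the pushed-down form only
  depends on the atoms of \<open>prop_form u\<close>.\<close>

lemma class_eq_binterp_prop_form:
  assumes C: "is_cong Ops X \<psi>" and V: "in_var Ops (quot Ops X \<psi>)" and u: "u \<in> Terms Ops X"
  shows "\<psi>``{u} = binterp (quot Ops X \<psi>) (atom_class Ops \<psi>) (prop_form u)"
proof -
  let ?Q = "quot Ops X \<psi>"
  have "\<psi>``{u} = binterp ?Q (\<lambda>q. \<psi>``{op_word (fst q) (Var (snd q))}) (push_ops [] u)"
    using class_op_word_eq_binterp_push_ops[OF C V u, of "[]"] by simp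
  also have "\<dots> = binterp ?Q (atom_class Ops \<psi> \<circ> atom_of) (push_ops [] u)"
  proof (rule binterp_cong)
    fix q assume q: "q \<in> set_bf (push_ops [] u)"
    then have w: "set (fst q) \<subseteq> Ops" and x: "snd q \<in> X"
      using set_push_ops[OF q] u by (auto simp: Terms_def)
    then have m: "realizable Ops (wmap (fst q))" by (auto simp: realizable_def)
    have "(atom_class Ops \<psi> \<circ> atom_of) q = wapp ?Q (word_of Ops (wmap (fst q))) (\<psi>``{Var (snd q)})"
      using word_of[OF m] x C by (simp add: atom_class_def atom_of_def wapp_quot)
    also have "\<dots> = wapp ?Q (fst q) (\<psi>``{Var (snd q)})"
      by (rule in_var_wapp_eq[OF V]) (use word_of[OF m] w x in \<open>simp_all add: quotientI\<close>)
    also have "\<dots> = \<psi>``{op_word (fst q) (Var (snd q))}" by (rule wapp_quot[OF C w]) (simp add: x)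
    finally show "\<psi>``{op_word (fst q) (Var (snd q))} = (atom_class Ops \<psi> \<circ> atom_of) q" by simp
  qed
  also have "\<dots> = binterp ?Q (atom_class Ops \<psi>) (prop_form u)"
    by (simp add: prop_form_def binterp_map)
  finally show ?thesis .
qed

lemma prop_equiv_subset_cong:
  assumes C: "is_cong Ops X \<psi>" and V: "in_var Ops (quot Ops X \<psi>)"
  shows "prop_equiv Ops X \<subseteq> \<psi>"
proof clarify
  fix s t assume "(s, t) \<in> prop_equiv Ops X"
  then have s: "s \<in> Terms Ops X" and t: "t \<in> Terms Ops X" and st: "\<And>v. teval v s = teval v t"
    by (auto simp: prop_equiv_def)
  let ?Q = "quot Ops X \<psi>"
  interpret BA_alg ?Q using V unfolding in_var_def by unfold_locales blast
  obtain ps where ps: "set ps = set_bf (prop_form s) \<union> set_bf (prop_form t)"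
    using finite_list[of "set_bf (prop_form s) \<union> set_bf (prop_form t)"] bf.set_finite by blast
  have "atom_class Ops \<psi> q \<in> car ?Q" if "q \<in> set ps" for q
  proof -
    have "realizable Ops (fst q) \<and> snd q \<in> X"
      using that ps set_prop_form[OF s, of q] set_prop_form[OF t, of q] s t by (auto simp: Terms_def)
    then show ?thesis using word_of[of Ops "fst q"] by (simp add: atom_class_def quotientI op_word_Terms)
  qed
  then have "binterp ?Q (atom_class Ops \<psi>) (prop_form s) = binterp ?Q (atom_class Ops \<psi>) (prop_form t)"
    by (intro binterp_eq_if_beval_eq) (use ps st in \<open>auto simp: teval_prop_form\<close>)
  then have "\<psi>``{s} = \<psi>``{t}" using class_eq_binterp_prop_form[OF C V] s t by simp
  then show "(s, t) \<in> \<psi>"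
    using eq_equiv_class[OF _ _ t] C by (auto simp: is_cong_def)
qed

lemma theta_eq_prop_equiv: "theta Ops X = prop_equiv Ops X"
proof
  show "theta Ops X \<subseteq> prop_equiv Ops X"
    unfolding theta_def using is_cong_prop_equiv in_var_quot_prop_equiv by blast
  have "prop_equiv Ops X \<subseteq> Terms Ops X \<times> Terms Ops X"
    by (auto simp: prop_equiv_def)
  then show "prop_equiv Ops X \<subseteq> theta Ops X"
    unfolding theta_def using prop_equiv_subset_cong[of Ops X] by blast
qed

lemma Fr_eq: "Fr Ops X = quot Ops X (prop_equiv Ops X)"
  by (simp add: Fr_def theta_eq_prop_equiv)

lemma frgen_eq: "frgen Ops X x = prop_equiv Ops X``{Var x}"
  by (simp add: frgen_def theta_eq_prop_equiv)

lemma Sg_Fr_obtain_term: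
  assumes "y \<in> Sg (Fr Ops X) Ops (frgen Ops X ` Y)" and "Y \<subseteq> X"
  obtains s where "s \<in> Terms Ops X" "vars s \<subseteq> Y" "y = prop_equiv Ops X``{s}"
proof -
  let ?E = "prop_equiv Ops X"
  note ops = quot_ops[OF is_cong_prop_equiv]
  have "\<exists>s. s \<in> Terms Ops X \<and> vars s \<subseteq> Y \<and> y = ?E``{s}"
    using assms(1)[unfolded Fr_eq]
  proof (induct rule: Sg.induct)
    case (gen z)
    then obtain x where "x \<in> Y" "z = frgen Ops X x" by blast
    then show ?case using assms(2) by (intro exI[of _ "Var x"]) (auto simp: frgen_eq)
  next
    case zr
    show ?case by (intro exI[of _ Zr]) simp
  next
    case un
    show ?case by (intro exI[of _ Tp]) simp
  next
    case (cp y)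
    then obtain s where "s \<in> Terms Ops X" "vars s \<subseteq> Y" "y = ?E``{s}" by blast
    then show ?case by (intro exI[of _ "Cp s"]) (simp add: ops)
  next
    case (jn y y')
    then obtain s s' where "s \<in> Terms Ops X" "vars s \<subseteq> Y" "y = ?E``{s}"
      "s' \<in> Terms Ops X" "vars s' \<subseteq> Y" "y' = ?E``{s'}" by blast
    then show ?case by (intro exI[of _ "Jn s s'"]) (simp add: ops)
  next
    case (mt y y')
    then obtain s s' where "s \<in> Terms Ops X" "vars s \<subseteq> Y" "y = ?E``{s}"
      "s' \<in> Terms Ops X" "vars s' \<subseteq> Y" "y' = ?E``{s'}" by blast
    then show ?case by (intro exI[of _ "Mt s s'"]) (simp add: ops)
  next
    case (op l y)
    then obtain s where "s \<in> Terms Ops X" "vars s \<subseteq> Y" "y = ?E``{s}" by blast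
    then show ?case using op.hyps(1) by (intro exI[of _ "Op l s"]) (simp add: ops)
  qed
  then show ?thesis using that by blast
qed

lemma class_in_Sg_Fr:
  assumes "s \<in> Terms Ops X" and "vars s \<subseteq> Y"
  shows "prop_equiv Ops X``{s} \<in> Sg (Fr Ops X) Ops (frgen Ops X ` Y)"
  using assms
proof (induct s)
  case (Var x)
  then show ?case by (intro Sg.gen) (auto simp: frgen_eq)
next
  case (Jn a b)
  then have "jn (Fr Ops X) (prop_equiv Ops X``{a}) (prop_equiv Ops X``{b}) \<in> Sg (Fr Ops X) Ops (frgen Ops X ` Y)"
    by (intro Sg.jn) auto
  with Jn.prems show ?case by (simp add: Fr_eq quot_ops[OF is_cong_prop_equiv])
next
  case (Mt a b)
  then have "mt (Fr Ops X) (prop_equiv Ops X``{a}) (prop_equiv Ops X``{b}) \<in> Sg (Fr Ops X) Ops (frgen Ops X ` Y)"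
    by (intro Sg.mt) auto
  with Mt.prems show ?case by (simp add: Fr_eq quot_ops[OF is_cong_prop_equiv])
next
  case (Cp a)
  then have "cp (Fr Ops X) (prop_equiv Ops X``{a}) \<in> Sg (Fr Ops X) Ops (frgen Ops X ` Y)"
    by (intro Sg.cp) auto
  with Cp.prems show ?case by (simp add: Fr_eq quot_ops[OF is_cong_prop_equiv])
next
  case Zr
  show ?case using Sg.zr[of "Fr Ops X"] by (simp add: Fr_eq)
next
  case Tp
  show ?case using Sg.un[of "Fr Ops X"] by (simp add: Fr_eq)
next
  case (Op l a)
  then have "sop (Fr Ops X) l (prop_equiv Ops X``{a}) \<in> Sg (Fr Ops X) Ops (frgen Ops X ` Y)"
    by (intro Sg.op) auto
  with Op.prems show ?case by (simp add: Fr_eq quot_ops[OF is_cong_prop_equiv])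
qed

lemma leq_Fr_class_iff:
  "a \<in> Terms Ops X \<Longrightarrow> b \<in> Terms Ops X \<Longrightarrow>
     leq (Fr Ops X) (prop_equiv Ops X``{a}) (prop_equiv Ops X``{b}) \<longleftrightarrow> (\<forall>v. teval v a \<longrightarrow> teval v b)"
  by (simp add: Fr_eq leq_def quot_ops[OF is_cong_prop_equiv] prop_equiv_class_eq_iff) blast

theorem theorem6p7:
  fixes Ops :: "'i lab set" and X X1 X2 :: "'x set"
    and a c :: "('x, 'i lab) trm set"
  assumes alpha2: "\<exists>i j :: 'i. i \<noteq> j"
    and V: "Ops = TAops \<or> Ops = SAops"
    and XU: "X1 \<union> X2 = X"
    and a: "a \<in> Sg (Fr Ops X) Ops (frgen Ops X ` X1)"
    and c: "c \<in> Sg (Fr Ops X) Ops (frgen Ops X ` X2)"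
    and ac: "leq (Fr Ops X) a c"
  shows "\<exists>b \<in> Sg (Fr Ops X) Ops (frgen Ops X ` (X1 \<inter> X2)).
           leq (Fr Ops X) a b \<and> leq (Fr Ops X) b c"
proof -
  obtain s where s: "s \<in> Terms Ops X" "vars s \<subseteq> X1" "a = prop_equiv Ops X``{s}"
    using Sg_Fr_obtain_term[OF a] XU by blast
  obtain t where t: "t \<in> Terms Ops X" "vars t \<subseteq> X2" "c = prop_equiv Ops X``{t}"
    using Sg_Fr_obtain_term[OF c] XU by blast
  have "teval v s \<Longrightarrow> teval v t" for v
    using ac s t by (simp add: leq_Fr_class_iff)
  then obtain u where u: "u \<in> Terms Ops X" "vars u \<subseteq> X1 \<inter> X2"
    and "\<And>v. teval v s \<Longrightarrow> teval v u" "\<And>v. teval v u \<Longrightarrow> teval v t"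
    using teval_interpolation[OF s(1,2) t(1,2)] by blast
  then have "leq (Fr Ops X) a (prop_equiv Ops X``{u}) \<and> leq (Fr Ops X) (prop_equiv Ops X``{u}) c"
    using s t by (simp add: leq_Fr_class_iff)
  moreover have "prop_equiv Ops X``{u} \<in> Sg (Fr Ops X) Ops (frgen Ops X ` (X1 \<inter> X2))"
    using u by (rule class_in_Sg_Fr)
  ultimately show ?thesis by blast
qed

end
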